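(* Let \[G=\langle a,b,c,s,t\mid sas^{-1}=ab,\ sbs^{-1}=b,\ scs^{-1}=c,\ tat^{-1}=ba,\ tbt^{-1}=b,\ tct^{-1}=c\rangle.\] Then the following subsets are equationally definable in $G$: (1) $\langle b\rangle$; (2) $\langle s\rangle$; (3) $\langle t\rangle$; (4) $\{(s^i,t^i)\mid i\in\mathbb{Z}\}\subseteq G^2$; (5) $\langle s,t\rangle$.
   Context: An equation over a finitely generated group $G$ with variables from a finite set $\mathcal X$ is an element $w\in G*F(\mathcal X)$, written $w=1$; a solution is a homomorphism $\phi:G*F(\mathcal X)\to G$ that is the identity on $G$ with $\phi(w)=1$; a system of equations is a finite set of equations in the same variables, solved by a common solution. A set $D\subseteq G^n$ is equationally definable if there is a system of equations $\mathcal E$ over $G$ and variables $X_1,\dots,X_n$ of $\mathcal E$ (not necessarily all variables) such that $D=\{(\phi(X_1),\dots,\phi(X_n)) \mid \phi \text{ a solution of } \mathcal E\}$. *)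

theory Defs
  imports "HOL-Algebra.Algebra"
begin

text \<open>A word over generators of type 'a: letters (x, False) stand for x,
  letters (x, True) stand for x inverse.\<close>
type_synonym 'a word = "('a \<times> bool) list"

inductive pres_eqv :: "('a word \<times> 'a word) set \<Rightarrow> 'a word \<Rightarrow> 'a word \<Rightarrow> bool"
  for R :: "('a word \<times> 'a word) set" where
  refl: "pres_eqv R w w"
| sym: "pres_eqv R u v \<Longrightarrow> pres_eqv R v u"
| trans: "pres_eqv R u v \<Longrightarrow> pres_eqv R v w \<Longrightarrow> pres_eqv R u w"
| cong: "pres_eqv R u v \<Longrightarrow> pres_eqv R (p @ u @ q) (p @ v @ q)"
| cancel: "pres_eqv R [(x, e), (x, \<not> e)] []"
| rel: "(u, v) \<in> R \<Longrightarrow> pres_eqv R u v"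

definition pres_class :: "('a word \<times> 'a word) set \<Rightarrow> 'a word \<Rightarrow> 'a word set" where
  "pres_class R w = {v. pres_eqv R w v}"

definition presented_group :: "('a word \<times> 'a word) set \<Rightarrow> 'a word set monoid" where
  "presented_group R =
     \<lparr>partial_object.carrier = range (pres_class R),
      monoid.mult = (\<lambda>P Q. pres_class R ((SOME u. u \<in> P) @ (SOME v. v \<in> Q))),
      monoid.one = pres_class R []\<rparr>"

text \<open>An equation over G with variables (of type nat) is an element of G * F(X),
  represented by a word whose letters are either constants from G (Inl g) or
  variables / inverse variables (Inr (x, False)) / (Inr (x, True)).\<close>
type_synonym 'g equation = "('g + nat \<times> bool) list"

fun eq_eval :: "('g, 'b) monoid_scheme \<Rightarrow> (nat \<Rightarrow> 'g) \<Rightarrow> 'g equation \<Rightarrow> 'g" where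
  "eq_eval G \<sigma> [] = \<one>\<^bsub>G\<^esub>"
| "eq_eval G \<sigma> (Inl g # w) = g \<otimes>\<^bsub>G\<^esub> eq_eval G \<sigma> w"
| "eq_eval G \<sigma> (Inr (x, False) # w) = \<sigma> x \<otimes>\<^bsub>G\<^esub> eq_eval G \<sigma> w"
| "eq_eval G \<sigma> (Inr (x, True) # w) = inv\<^bsub>G\<^esub> (\<sigma> x) \<otimes>\<^bsub>G\<^esub> eq_eval G \<sigma> w"

definition is_equation :: "('g, 'b) monoid_scheme \<Rightarrow> 'g equation \<Rightarrow> bool" where
  "is_equation G w \<longleftrightarrow> (\<forall>g. Inl g \<in> set w \<longrightarrow> g \<in> carrier G)"

definition solves :: "('g, 'b) monoid_scheme \<Rightarrow> 'g equation set \<Rightarrow> (nat \<Rightarrow> 'g) \<Rightarrow> bool" where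
  "solves G E \<sigma> \<longleftrightarrow> (\<forall>x. \<sigma> x \<in> carrier G) \<and> (\<forall>w\<in>E. eq_eval G \<sigma> w = \<one>\<^bsub>G\<^esub>)"

text \<open>D \<subseteq> G^n (tuples as lists of length n) is equationally definable.\<close>
definition eq_definable :: "('g, 'b) monoid_scheme \<Rightarrow> nat \<Rightarrow> 'g list set \<Rightarrow> bool" where
  "eq_definable G n D \<longleftrightarrow>
     (\<exists>E xs. finite E \<and> (\<forall>w\<in>E. is_equation G w) \<and> length xs = n \<and>
        D = {map \<sigma> xs | \<sigma>. solves G E \<sigma>})"

datatype gen = ga | gb | gc | gs | gt

abbreviation (input) gl :: "gen \<Rightarrow> gen word" where "gl x \<equiv> [(x, False)]"
abbreviation (input) gli :: "gen \<Rightarrow> gen word" where "gli x \<equiv> [(x, True)]"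

definition rels6 :: "(gen word \<times> gen word) set" where
  "rels6 = {
     (gl gs @ gl ga @ gli gs, gl ga @ gl gb),
     (gl gs @ gl gb @ gli gs, gl gb),
     (gl gs @ gl gc @ gli gs, gl gc),
     (gl gt @ gl ga @ gli gt, gl gb @ gl ga),
     (gl gt @ gl gb @ gli gt, gl gb),
     (gl gt @ gl gc @ gli gt, gl gc)}"

definition G6 :: "gen word set monoid" where
  "G6 = presented_group rels6"

definition gen6 :: "gen \<Rightarrow> gen word set" where
  "gen6 x = pres_class rels6 [(x, False)]"

end

theory Submission
  imports Defs
begin

text \<open>G6 is the semidirect product of the free group F(a, b, c) by the free group F(s, t),
  where s and t fix b and c and send a to a b and to b a respectively. Normal forms (u, g), with
  u and g reduced words over a, b, c and over s, t, determine the centralisers: an element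
  commuting with b and c has trivial F(a, b, c)-part, because in a free group only the powers
  of a letter commute with it; hence C(b, c) = \<langle>s, t\<rangle>, and in the same way
  C(b, c, s) = \<langle>s\<rangle> and C(b, c, t) = \<langle>t\<rangle>. Centralisers of finite
  sets are defined by the equations X h = h X. Finally s^i a s^-i = a b^i and
  t^i a t^-i = b^i a, so x lies in \<langle>b\<rangle> iff y a y^-1 = a x for some y in
  C(b, c, s), and (y, z) in C(b, c, s) \<times> C(b, c, t) is a pair (s^i, t^i) iff
  y a y^-1 = a w and z a z^-1 = w a for some w, as b has infinite order.\<close>

section \<open>Presented groups\<close>

definition letter_inv :: "'a \<times> bool \<Rightarrow> 'a \<times> bool" where
  "letter_inv l = (fst l, \<not> snd l)"

definition word_inv :: "'a word \<Rightarrow> 'a word" where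
  "word_inv w = rev (map letter_inv w)"

lemma letter_inv_inv [simp]: "letter_inv (letter_inv x) = x"
  by (simp add: letter_inv_def)

lemma letter_inv_neq [simp]: "letter_inv x \<noteq> x" "x \<noteq> letter_inv x"
  by (auto simp: letter_inv_def prod_eq_iff)

lemma word_inv_inv [simp]: "word_inv (word_inv w) = w"
  by (simp add: word_inv_def rev_map comp_def)

lemma word_inv_simps [simp]:
  "word_inv [] = []" "word_inv (x # w) = word_inv w @ [letter_inv x]"
  "word_inv (u @ v) = word_inv v @ word_inv u"
  by (auto simp: word_inv_def)

lemma pres_eqv_append:
  assumes "pres_eqv R u u'" "pres_eqv R v v'"
  shows "pres_eqv R (u @ v) (u' @ v')"
proof -
  have "pres_eqv R (u @ v) (u' @ v)" using pres_eqv.cong[OF assms(1), of "[]" v] by simp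
  moreover have "pres_eqv R (u' @ v) (u' @ v')" using pres_eqv.cong[OF assms(2), of u' "[]"] by simp
  ultimately show ?thesis by (rule pres_eqv.trans)
qed

lemma pres_eqv_Cons: "pres_eqv R u v \<Longrightarrow> pres_eqv R (x # u) (x # v)"
  using pres_eqv_append[OF pres_eqv.refl, of R u v "[x]"] by simp

lemma pres_eqv_letter_inv: "pres_eqv R [x, letter_inv x] []"
  using pres_eqv.cancel[of R "fst x" "snd x"] by (simp add: letter_inv_def)

lemma pres_eqv_word_inv: "pres_eqv R (word_inv w @ w) []"
proof (induction w rule: rev_induct)
  case Nil
  show ?case by (simp add: pres_eqv.refl)
next
  case (snoc x w)
  have "pres_eqv R (letter_inv x # (word_inv w @ w) @ [x]) (letter_inv x # [] @ [x])"
    using pres_eqv.cong[OF snoc.IH, of "[letter_inv x]" "[x]"] by simp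
  then show ?case
    using pres_eqv_letter_inv[of R "letter_inv x"] by (auto intro: pres_eqv.trans)
qed

lemma pres_class_eq_iff: "pres_class R u = pres_class R v \<longleftrightarrow> pres_eqv R u v"
proof
  assume "pres_class R u = pres_class R v"
  then show "pres_eqv R u v" by (auto simp: pres_class_def intro: pres_eqv.refl)
next
  assume "pres_eqv R u v"
  then show "pres_class R u = pres_class R v"
    unfolding pres_class_def using pres_eqv.trans pres_eqv.sym by blast
qed

lemma pres_class_some: "pres_class R (SOME v. v \<in> pres_class R u) = pres_class R u"
proof -
  have "u \<in> pres_class R u" by (simp add: pres_class_def pres_eqv.refl)
  then have "(SOME v. v \<in> pres_class R u) \<in> pres_class R u" by (rule someI)
  then show ?thesis unfolding pres_class_eq_iff by (simp add: pres_class_def pres_eqv.sym)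
qed

lemma presented_group_carrier: "carrier (presented_group R) = range (pres_class R)"
  by (simp add: presented_group_def)

lemma presented_group_one: "\<one>\<^bsub>presented_group R\<^esub> = pres_class R []"
  by (simp add: presented_group_def)

lemma presented_group_mult:
  "pres_class R u \<otimes>\<^bsub>presented_group R\<^esub> pres_class R v = pres_class R (u @ v)"
proof -
  let ?u = "SOME x. x \<in> pres_class R u" and ?v = "SOME x. x \<in> pres_class R v"
  have "pres_eqv R ?u u" "pres_eqv R ?v v"
    using pres_class_some[of R u] pres_class_some[of R v] by (simp_all add: pres_class_eq_iff)
  then have "pres_eqv R (?u @ ?v) (u @ v)" by (rule pres_eqv_append)
  then show ?thesis by (simp add: presented_group_def pres_class_eq_iff)
qed

lemma group_presented_group: "group (presented_group R)"
proof (rule groupI)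
  fix x y z
  assume "x \<in> carrier (presented_group R)" "y \<in> carrier (presented_group R)"
    "z \<in> carrier (presented_group R)"
  then show "x \<otimes>\<^bsub>presented_group R\<^esub> y \<otimes>\<^bsub>presented_group R\<^esub> z =
      x \<otimes>\<^bsub>presented_group R\<^esub> (y \<otimes>\<^bsub>presented_group R\<^esub> z)"
    by (auto simp: presented_group_carrier presented_group_mult)
next
  fix x y
  assume "x \<in> carrier (presented_group R)" "y \<in> carrier (presented_group R)"
  then show "x \<otimes>\<^bsub>presented_group R\<^esub> y \<in> carrier (presented_group R)"
    by (auto simp: presented_group_carrier presented_group_mult)
next
  fix x
  assume "x \<in> carrier (presented_group R)"
  then obtain u where x: "x = pres_class R u" by (auto simp: presented_group_carrier)
  show "\<one>\<^bsub>presented_group R\<^esub> \<otimes>\<^bsub>presented_group R\<^esub> x = x"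
    by (simp add: x presented_group_mult presented_group_one)
  show "\<exists>y\<in>carrier (presented_group R). y \<otimes>\<^bsub>presented_group R\<^esub> x = \<one>\<^bsub>presented_group R\<^esub>"
    by (rule bexI[of _ "pres_class R (word_inv u)"])
       (simp_all add: x presented_group_mult presented_group_one presented_group_carrier
          pres_class_eq_iff pres_eqv_word_inv rangeI)
qed (simp add: presented_group_one presented_group_carrier)

lemma presented_group_inv:
  "inv\<^bsub>presented_group R\<^esub> (pres_class R u) = pres_class R (word_inv u)"
  by (rule group.inv_equality[OF group_presented_group])
    (simp_all add: presented_group_mult presented_group_one presented_group_carrier
      pres_class_eq_iff pres_eqv_word_inv rangeI)

section \<open>Free reduction\<close>

definition cons_red :: "'a \<times> bool \<Rightarrow> 'a word \<Rightarrow> 'a word" where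
  "cons_red x v = (if v \<noteq> [] \<and> hd v = letter_inv x then tl v else x # v)"

fun reduced :: "'a word \<Rightarrow> bool" where
  "reduced [] = True"
| "reduced [x] = True"
| "reduced (x # y # v) = (y \<noteq> letter_inv x \<and> reduced (y # v))"

definition free_mult :: "'a word \<Rightarrow> 'a word \<Rightarrow> 'a word" where
  "free_mult w v = foldr cons_red w v"

lemma cons_red_Nil [simp]: "cons_red x [] = [x]"
  by (simp add: cons_red_def)

lemma reduced_Cons: "reduced (x # v) \<longleftrightarrow> reduced v \<and> (v = [] \<or> hd v \<noteq> letter_inv x)"
  by (cases v) auto

lemma reduced_replicate: "reduced (replicate n l)"
  by (induction n) (auto simp: reduced_Cons)

lemma free_mult_Nil [simp]: "free_mult [] v = v"
  and free_mult_Cons [simp]: "free_mult (x # w) v = cons_red x (free_mult w v)"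
  and free_mult_append: "free_mult (w1 @ w2) v = free_mult w1 (free_mult w2 v)"
  by (simp_all add: free_mult_def)

lemma reduced_cons_red: "reduced v \<Longrightarrow> reduced (cons_red x v)"
  by (cases v) (auto simp: cons_red_def reduced_Cons)

lemma reduced_free_mult: "reduced v \<Longrightarrow> reduced (free_mult w v)"
  by (induction w) (auto simp: reduced_cons_red)

lemma cons_red_cancel: "reduced v \<Longrightarrow> cons_red x (cons_red (letter_inv x) v) = v"
  by (cases v) (auto simp: cons_red_def reduced_Cons)

lemma cons_red_cancel_pair:
  "reduced v \<Longrightarrow> cons_red (y, e) (cons_red (y, \<not> e) v) = v"
  "reduced v \<Longrightarrow> cons_red (y, \<not> e) (cons_red (y, e) v) = v"
  using cons_red_cancel[of v "(y, e)"] cons_red_cancel[of v "(y, \<not> e)"]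
  by (simp_all add: letter_inv_def)

lemma cons_red_reduced: "reduced (x # v) \<Longrightarrow> cons_red x v = x # v"
  by (auto simp: cons_red_def reduced_Cons)

lemma free_mult_word_inv: "reduced v \<Longrightarrow> free_mult (word_inv w) (free_mult w v) = v"
  by (induction w arbitrary: v)
    (simp_all add: free_mult_append cons_red_cancel[of _ "letter_inv _", simplified] reduced_free_mult)

lemma free_mult_reduced: "reduced (w @ v) \<Longrightarrow> free_mult w v = w @ v"
  by (induction w) (auto simp: reduced_Cons cons_red_reduced)

lemma set_cons_red: "set (cons_red x v) \<subseteq> insert x (set v)"
  by (cases v) (auto simp: cons_red_def)

lemma set_free_mult: "set (free_mult w v) \<subseteq> set w \<union> set v"
  by (induction w) (use set_cons_red in fastforce)+

lemma pres_eqv_cons_red: "pres_eqv R (x # v) (cons_red x v)"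
proof (cases "v \<noteq> [] \<and> hd v = letter_inv x")
  case True
  then obtain v' where "v = letter_inv x # v'" by (cases v) auto
  then show ?thesis
    using pres_eqv_append[OF pres_eqv_letter_inv pres_eqv.refl, of R x v'] by (simp add: cons_red_def)
qed (auto simp: cons_red_def intro: pres_eqv.refl)

lemma pres_eqv_free_mult: "pres_eqv R (w @ v) (free_mult w v)"
  by (induction w) (auto intro: pres_eqv.refl pres_eqv.trans pres_eqv_Cons pres_eqv_cons_red)

lemma free_mult_snoc:
  "reduced u \<Longrightarrow>
    free_mult u [x] = (if u \<noteq> [] \<and> last u = letter_inv x then butlast u else u @ [x])"
proof (induction u)
  case (Cons y u)
  have ru: "reduced u" and hd_u: "u \<noteq> [] \<Longrightarrow> hd u \<noteq> letter_inv y"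
    using Cons.prems by (simp_all add: reduced_Cons)
  show ?case
  proof (cases "u = []")
    case True
    then show ?thesis by (auto simp: cons_red_def letter_inv_def)
  next
    case u: False
    show ?thesis
  proof (cases "last u = letter_inv x")
    case True
    have "butlast u \<noteq> [] \<Longrightarrow> hd (butlast u) = hd u" by (cases u) auto
    then have "cons_red y (butlast u) = y # butlast u"
      using hd_u u True by (auto simp: cons_red_def)
    then show ?thesis using Cons.IH[OF ru] u True by simp
  next
    case False
    have "cons_red y (u @ [x]) = y # u @ [x]"
      using hd_u u by (auto simp: cons_red_def)
    then show ?thesis using Cons.IH[OF ru] u False by simp
  qed
  qed
qed simp

lemma Cons_eq_snoc_replicate: "x # t = t @ [z] \<Longrightarrow> t = replicate (length t) x"
  by (induction t arbitrary: x) auto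

lemma commute_letter_replicate:
  assumes "reduced u" and "free_mult u [x] = cons_red x u"
  shows "\<exists>n e. u = replicate n (fst x, e)"
proof -
  let ?L = "u \<noteq> [] \<and> last u = letter_inv x" and ?H = "u \<noteq> [] \<and> hd u = letter_inv x"
  have eq: "(if ?L then butlast u else u @ [x]) = (if ?H then tl u else x # u)"
    using assms by (simp add: free_mult_snoc cons_red_def)
  then have "length (if ?L then butlast u else u @ [x]) = length (if ?H then tl u else x # u)"
    by simp
  then have "?L \<longleftrightarrow> ?H" by (auto split: if_splits)
  show ?thesis
  proof (cases ?H)
    case True
    then obtain t where u: "u = letter_inv x # t" by (cases u) auto
    have "butlast u = t" and "last u = letter_inv x"
      using eq True \<open>?L \<longleftrightarrow> ?H\<close> u by simp_all
    then have "letter_inv x # t = t @ [letter_inv x]"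
      using append_butlast_last_id[of u] u by simp
    then have "u = replicate (Suc (length t)) (fst x, \<not> snd x)"
      using u Cons_eq_snoc_replicate by (metis letter_inv_def replicate_Suc)
    then show ?thesis by blast
  next
    case False
    then have "\<not> ?L" using \<open>?L \<longleftrightarrow> ?H\<close> by blast
    with eq False have "u @ [x] = x # u" by (simp only: if_False)
    then show ?thesis using Cons_eq_snoc_replicate by (metis prod.collapse)
  qed
qed

definition centraliser :: "('a, 'b) monoid_scheme \<Rightarrow> 'a set \<Rightarrow> 'a set" where
  "centraliser G H = {x \<in> carrier G. \<forall>h\<in>H. x \<otimes>\<^bsub>G\<^esub> h = h \<otimes>\<^bsub>G\<^esub> x}"

lemma (in group) subgroup_centraliser:
  assumes "H \<subseteq> carrier G"
  shows "subgroup (centraliser G H) G"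
proof (rule subgroupI)
  show "centraliser G H \<subseteq> carrier G" by (auto simp: centraliser_def)
  show "centraliser G H \<noteq> {}" using assms by (auto simp: centraliser_def intro!: exI[of _ \<one>])
next
  fix x assume x: "x \<in> centraliser G H"
  show "inv x \<in> centraliser G H"
    unfolding centraliser_def
  proof (intro CollectI conjI ballI)
    fix h assume "h \<in> H"
    then have "h \<in> carrier G" "x \<otimes> h = h \<otimes> x" "x \<in> carrier G"
      using assms x by (auto simp: centraliser_def)
    then show "inv x \<otimes> h = h \<otimes> inv x"
      by (metis inv_closed inv_solve_left m_assoc m_closed r_inv r_one)
  qed (use x in \<open>simp add: centraliser_def\<close>)
next
  fix x y assume "x \<in> centraliser G H" "y \<in> centraliser G H"
  then show "x \<otimes> y \<in> centraliser G H"
    using assms unfolding centraliser_def by (auto simp: m_assoc[symmetric]) (metis m_assoc subsetD)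
qed

lemma (in group) conj_hom:
  assumes "g \<in> carrier G"
  shows "(\<lambda>x. g \<otimes> x \<otimes> inv g) \<in> hom G G"
proof -
  have "inv g \<otimes> (g \<otimes> y) = y" if "y \<in> carrier G" for y
    using assms that by (simp add: m_assoc[symmetric])
  then show ?thesis using assms by (intro homI) (simp_all add: m_assoc)
qed

lemma (in group) conj_int_pow:
  assumes "g \<in> carrier G" "x \<in> carrier G"
  shows "g \<otimes> x [^] (i::int) \<otimes> inv g = (g \<otimes> x \<otimes> inv g) [^] i"
  using hom_int_pow[OF conj_hom[OF assms(1)] assms(2) is_group is_group] .

lemma (in group) conj_inv:
  "g \<in> carrier G \<Longrightarrow> x \<in> carrier G \<Longrightarrow> g \<otimes> inv x \<otimes> inv g = inv (g \<otimes> x \<otimes> inv g)"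
  by (simp add: inv_mult_group m_assoc)

lemma (in group) int_pow_conj_right_twist:
  assumes x: "x \<in> carrier G" and y: "y \<in> carrier G" and z: "z \<in> carrier G"
    and xz: "x \<otimes> z = z \<otimes> x" and xy: "x \<otimes> y \<otimes> inv x = y \<otimes> z"
  shows "x [^] (i::int) \<otimes> y \<otimes> inv (x [^] i) = y \<otimes> z [^] i"
proof -
  txt \<open>Conjugating x by y^-1 gives z x, whose powers are z^i x^i.\<close>
  have "x \<otimes> y = y \<otimes> z \<otimes> x"
    using xy x y z by (metis inv_solve_right' m_closed)
  then have "inv y \<otimes> x \<otimes> inv (inv y) = z \<otimes> x"
    using x y z by (metis inv_closed inv_inv inv_solve_left m_assoc m_closed)
  then have "inv y \<otimes> x [^] i \<otimes> y = (z \<otimes> x) [^] i"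
    using conj_int_pow[of "inv y" x i] x y by simp
  also have "\<dots> = z [^] i \<otimes> x [^] i"
    using int_pow_mult_distrib[OF xz[symmetric] z x] .
  finally have "x [^] i \<otimes> y = y \<otimes> z [^] i \<otimes> x [^] i"
    using x y z inv_solve_left' m_assoc by auto
  then show ?thesis
    using x y z by (simp add: inv_solve_right')
qed

lemma (in group) int_pow_conj_left_twist:
  assumes x: "x \<in> carrier G" and y: "y \<in> carrier G" and z: "z \<in> carrier G"
    and xz: "x \<otimes> z = z \<otimes> x" and xy: "x \<otimes> y \<otimes> inv x = z \<otimes> y"
  shows "x [^] (i::int) \<otimes> y \<otimes> inv (x [^] i) = z [^] i \<otimes> y"
proof -
  txt \<open>Apply the right-twisted version to y^-1 and z^-1.\<close>
  have "x \<otimes> inv y \<otimes> inv x = inv y \<otimes> inv z"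
    using xy x y z by (simp add: conj_inv inv_mult_group)
  moreover have "x \<otimes> inv z = inv z \<otimes> x"
    using xz x z by (metis conj_inv inv_closed inv_solve_right m_closed)
  ultimately have "x [^] i \<otimes> inv y \<otimes> inv (x [^] i) = inv y \<otimes> inv (z [^] i)"
    using int_pow_conj_right_twist[of x "inv y" "inv z" i] x y z by (simp add: int_pow_inv)
  then show ?thesis
    using x y z by (metis conj_inv int_pow_closed inv_closed inv_inv inv_mult_group)
qed

definition eq_inv :: "('g, 'b) monoid_scheme \<Rightarrow> 'g equation \<Rightarrow> 'g equation" where
  "eq_inv G w = rev (map (case_sum (\<lambda>g. Inl (inv\<^bsub>G\<^esub> g)) (\<lambda>(x, e). Inr (x, \<not> e))) w)"

definition eq_equal :: "('g, 'b) monoid_scheme \<Rightarrow> 'g equation \<Rightarrow> 'g equation \<Rightarrow> 'g equation" where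
  "eq_equal G u v = u @ eq_inv G v"

definition commute_eqs :: "('g, 'b) monoid_scheme \<Rightarrow> nat \<Rightarrow> 'g set \<Rightarrow> 'g equation set" where
  "commute_eqs G k H = (\<lambda>h. eq_equal G [Inr (k, False), Inl h] [Inl h, Inr (k, False)]) ` H"

context group
begin

lemma is_equation_eq_equal:
  "is_equation G u \<Longrightarrow> is_equation G v \<Longrightarrow> is_equation G (eq_equal G u v)"
  by (auto simp: is_equation_def eq_equal_def eq_inv_def split: sum.splits)

lemma eq_eval_Cons_Inr:
  "eq_eval G \<sigma> (Inr (x, e) # w) = (if e then inv (\<sigma> x) else \<sigma> x) \<otimes> eq_eval G \<sigma> w"
  by (cases e) simp_all

lemma eq_eval_closed:
  "(\<forall>x. \<sigma> x \<in> carrier G) \<Longrightarrow> is_equation G u \<Longrightarrow> eq_eval G \<sigma> u \<in> carrier G"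
proof (induction u)
  case (Cons l w)
  then show ?case
    by (cases l) (auto simp: is_equation_def eq_eval_Cons_Inr)
qed simp

lemma eq_eval_append:
  assumes "\<forall>x. \<sigma> x \<in> carrier G" "is_equation G u" "is_equation G v"
  shows "eq_eval G \<sigma> (u @ v) = eq_eval G \<sigma> u \<otimes> eq_eval G \<sigma> v"
  using assms(2)
proof (induction u)
  case (Cons l w)
  then have "is_equation G w" by (simp add: is_equation_def)
  with Cons assms show ?case
    by (cases l) (auto simp: is_equation_def eq_eval_Cons_Inr eq_eval_closed m_assoc)
qed (use assms in \<open>simp add: eq_eval_closed\<close>)

lemma is_equation_eq_inv: "is_equation G u \<Longrightarrow> is_equation G (eq_inv G u)"
  by (auto simp: is_equation_def eq_inv_def split: sum.splits)

lemma eq_eval_eq_inv: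
  assumes "\<forall>x. \<sigma> x \<in> carrier G" "is_equation G u"
  shows "eq_eval G \<sigma> (eq_inv G u) = inv (eq_eval G \<sigma> u)"
  using assms(2)
proof (induction u)
  case Nil
  show ?case by (simp add: eq_inv_def)
next
  case (Cons l w)
  then have w: "is_equation G w" and l: "is_equation G [l]" by (simp_all add: is_equation_def)
  have "eq_eval G \<sigma> (eq_inv G (l # w)) = eq_eval G \<sigma> (eq_inv G w @ eq_inv G [l])"
    by (simp add: eq_inv_def)
  also have "\<dots> = inv (eq_eval G \<sigma> w) \<otimes> inv (eq_eval G \<sigma> [l])"
  proof -
    have "eq_eval G \<sigma> (eq_inv G [l]) = inv (eq_eval G \<sigma> [l])"
      using l assms(1) by (cases l) (auto simp: eq_inv_def is_equation_def eq_eval_Cons_Inr)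
    then show ?thesis
      using assms(1) by (simp add: eq_eval_append w l is_equation_eq_inv Cons.IH[OF w])
  qed
  also have "\<dots> = inv (eq_eval G \<sigma> (l # w))"
    using eq_eval_append[OF assms(1) l w] eq_eval_closed[OF assms(1)] w l
    by (simp add: inv_mult_group)
  finally show ?case .
qed

lemma eq_eval_eq_equal:
  assumes "\<forall>x. \<sigma> x \<in> carrier G" "is_equation G u" "is_equation G v"
  shows "eq_eval G \<sigma> (eq_equal G u v) = \<one> \<longleftrightarrow> eq_eval G \<sigma> u = eq_eval G \<sigma> v"
  using assms
  by (simp add: eq_equal_def eq_eval_append is_equation_eq_inv eq_eval_eq_inv eq_eval_closed
      inv_solve_right')

lemma eq_eval_conj_eq:
  assumes "\<forall>x. \<sigma> x \<in> carrier G" "a \<in> carrier G" "is_equation G v"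
  shows "eq_eval G \<sigma> (eq_equal G [Inr (k, False), Inl a, Inr (k, True)] v) = \<one> \<longleftrightarrow>
    \<sigma> k \<otimes> a \<otimes> inv (\<sigma> k) = eq_eval G \<sigma> v"
  using assms by (subst eq_eval_eq_equal) (auto simp: is_equation_def m_assoc)

lemma eq_eval_commute_eqs:
  assumes "\<forall>x. \<sigma> x \<in> carrier G" "H \<subseteq> carrier G"
  shows "(\<forall>w\<in>commute_eqs G k H. eq_eval G \<sigma> w = \<one>) \<longleftrightarrow> \<sigma> k \<in> centraliser G H"
proof -
  have "eq_eval G \<sigma> (eq_equal G [Inr (k, False), Inl h] [Inl h, Inr (k, False)]) = \<one> \<longleftrightarrow>
      \<sigma> k \<otimes> h = h \<otimes> \<sigma> k" if "h \<in> H" for h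
    using that assms by (subst eq_eval_eq_equal) (auto simp: is_equation_def)
  then show ?thesis
    using assms(1) by (auto simp: commute_eqs_def centraliser_def)
qed

lemma is_equation_commute_eqs:
  assumes "H \<subseteq> carrier G" "w \<in> commute_eqs G k H"
  shows "is_equation G w"
proof -
  obtain h where "h \<in> H" and w: "w = eq_equal G [Inr (k, False), Inl h] [Inl h, Inr (k, False)]"
    using assms(2) by (auto simp: commute_eqs_def)
  then have "h \<in> carrier G" using assms(1) by blast
  then show ?thesis unfolding w by (intro is_equation_eq_equal) (auto simp: is_equation_def)
qed

end

lemma eq_definableI:
  assumes "finite E" "\<forall>w\<in>E. is_equation G w" "length xs = n"
    and "\<And>\<sigma>. solves G E \<sigma> \<Longrightarrow> map \<sigma> xs \<in> D"
    and "\<And>d. d \<in> D \<Longrightarrow> \<exists>\<sigma>. solves G E \<sigma> \<and> map \<sigma> xs = d"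
  shows "eq_definable G n D"
  unfolding eq_definable_def using assms by blast

lemma (in group) eq_definable_centraliser:
  assumes "finite H" "H \<subseteq> carrier G"
  shows "eq_definable G 1 {[x] | x. x \<in> centraliser G H}"
proof (rule eq_definableI[where E = "commute_eqs G 0 H" and xs = "[0]"])
  show "finite (commute_eqs G 0 H)" using assms(1) by (simp add: commute_eqs_def)
  show "\<forall>w\<in>commute_eqs G 0 H. is_equation G w" using assms(2) is_equation_commute_eqs by blast
next
  fix \<sigma> assume "solves G (commute_eqs G 0 H) \<sigma>"
  then have "\<forall>x. \<sigma> x \<in> carrier G" "\<forall>w\<in>commute_eqs G 0 H. eq_eval G \<sigma> w = \<one>"
    by (simp_all add: solves_def)
  then have "\<sigma> 0 \<in> centraliser G H"
    using eq_eval_commute_eqs[OF _ assms(2)] by blast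
  then show "map \<sigma> [0] \<in> {[x] | x. x \<in> centraliser G H}" by simp
next
  fix d assume "d \<in> {[x] | x. x \<in> centraliser G H}"
  then obtain x where d: "d = [x]" and x: "x \<in> centraliser G H" by blast
  then have "x \<in> carrier G" by (simp add: centraliser_def)
  then have "solves G (commute_eqs G 0 H) (\<lambda>_. x)"
    using eq_eval_commute_eqs[OF _ assms(2), where \<sigma> = "\<lambda>_. x" and k = 0] x
    unfolding solves_def by blast
  moreover have "map (\<lambda>_. x) [0::nat] = d" using d by simp
  ultimately show "\<exists>\<sigma>. solves G (commute_eqs G 0 H) \<sigma> \<and> map \<sigma> [0] = d" by blast
qed (simp only: length_Cons list.size(3) One_nat_def)

section \<open>Normal forms for G6\<close>

definition is_base :: "gen \<times> bool \<Rightarrow> bool" where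
  "is_base x \<longleftrightarrow> fst x \<in> {ga, gb, gc}"

lemma not_is_base_iff: "\<not> is_base x \<longleftrightarrow> fst x \<in> {gs, gt}"
  by (cases "fst x") (auto simp: is_base_def)

lemma is_base_letter_inv [simp]: "is_base (letter_inv x) = is_base x"
  by (simp add: is_base_def letter_inv_def)

text \<open>The automorphisms of F(a, b, c) by which s, t, s^-1, t^-1 act: they fix b and c and
  send a to a b, b a, a b^-1, b^-1 a respectively.\<close>
fun twist_letter :: "gen \<times> bool \<Rightarrow> gen \<times> bool \<Rightarrow> gen word" where
  "twist_letter (gs, e) (ga, False) = [(ga, False), (gb, e)]"
| "twist_letter (gs, e) (ga, True) = [(gb, \<not> e), (ga, True)]"
| "twist_letter (gt, e) (ga, False) = [(gb, e), (ga, False)]"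
| "twist_letter (gt, e) (ga, True) = [(ga, True), (gb, \<not> e)]"
| "twist_letter l x = [x]"

definition twist :: "gen \<times> bool \<Rightarrow> gen word \<Rightarrow> gen word" where
  "twist l u = free_mult (concat (map (twist_letter l) u)) []"

lemma twist_letter_letter_inv: "twist_letter l (letter_inv x) = word_inv (twist_letter l x)"
  by (cases "(l, x)" rule: twist_letter.cases) (simp_all add: letter_inv_def)

lemma base_twist_letter: "is_base x \<Longrightarrow> y \<in> set (twist_letter l x) \<Longrightarrow> is_base y"
  by (cases "(l, x)" rule: twist_letter.cases) (auto simp: is_base_def)

lemma twist_letter_non_a: "fst x \<noteq> ga \<Longrightarrow> twist_letter l x = [x]"
  by (cases "(l, x)" rule: twist_letter.cases) auto

lemma free_mult_twist_letter_inv: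
  "reduced r \<Longrightarrow>
    free_mult (concat (map (twist_letter l) (twist_letter (letter_inv l) x))) r = cons_red x r"
  by (cases "(l, x)" rule: twist_letter.cases)
    (simp_all add: letter_inv_def cons_red_cancel_pair reduced_cons_red)

lemma reduced_twist: "reduced (twist l u)"
  by (simp add: twist_def reduced_free_mult)

lemma twist_Nil [simp]: "twist l [] = []"
  by (simp add: twist_def)

lemma twist_cons_red: "twist l (cons_red x v) = free_mult (twist_letter l x) (twist l v)"
proof (cases "v \<noteq> [] \<and> hd v = letter_inv x")
  case True
  then obtain v' where v: "v = letter_inv x # v'" by (cases v) auto
  have "twist l v = free_mult (word_inv (twist_letter l x)) (twist l v')"
    by (simp add: v twist_def free_mult_append twist_letter_letter_inv)
  then show ?thesis
    using free_mult_word_inv[OF reduced_twist, of "word_inv (twist_letter l x)"]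
    by (simp add: cons_red_def v)
qed (auto simp: cons_red_def twist_def free_mult_append)

lemma twist_free_mult:
  "twist l (free_mult w v) = free_mult (concat (map (twist_letter l) w)) (twist l v)"
  by (induction w) (auto simp: twist_cons_red free_mult_append)

lemma twist_twist_inv: "reduced u \<Longrightarrow> twist l (twist (letter_inv l) u) = u"
proof -
  assume u: "reduced u"
  have "concat (map (twist_letter l) (concat (map (twist_letter (letter_inv l)) u))) =
      concat (map (\<lambda>x. concat (map (twist_letter l) (twist_letter (letter_inv l) x))) u)"
    by (induction u) auto
  then have "twist l (twist (letter_inv l) u) =
      free_mult (concat (map (\<lambda>x. concat (map (twist_letter l) (twist_letter (letter_inv l) x))) u)) []"
    by (simp add: twist_def[of "letter_inv l"] twist_free_mult)
  also have "\<dots> = free_mult u []"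
    by (induction u) (simp_all add: free_mult_append free_mult_twist_letter_inv reduced_free_mult)
  finally show ?thesis using free_mult_reduced[of u "[]"] u by simp
qed

lemma base_twist: "\<forall>x\<in>set u. is_base x \<Longrightarrow> \<forall>y\<in>set (twist l u). is_base y"
  using set_free_mult[of "concat (map (twist_letter l) u)" "[]"]
  by (auto simp: twist_def dest: base_twist_letter)

lemma foldr_twist_Nil [simp]: "foldr twist g [] = []"
  by (induction g) simp_all

lemma foldr_twist_non_a: "fst x \<noteq> ga \<Longrightarrow> foldr twist g [x] = [x]"
  by (induction g) (simp_all add: twist_def twist_letter_non_a)

fun nf_act :: "gen \<times> bool \<Rightarrow> gen word \<times> gen word \<Rightarrow> gen word \<times> gen word" where
  "nf_act l (u, g) = (if is_base l then (cons_red l u, g) else (twist l u, cons_red l g))"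

text \<open>The normal form of w is the pair (u, g) of reduced words over a, b, c and over s, t
  with w = u g in G6, built up from the right: a letter s or t is moved past u by
  twisting u.\<close>
definition nf :: "gen word \<Rightarrow> gen word \<times> gen word" where
  "nf w = foldr nf_act w ([], [])"

fun nf_pair :: "gen word \<times> gen word \<Rightarrow> bool" where
  "nf_pair (u, g) \<longleftrightarrow>
     reduced u \<and> reduced g \<and> (\<forall>x\<in>set u. is_base x) \<and> (\<forall>x\<in>set g. \<not> is_base x)"

lemma nf_pair_nf_act: "nf_pair m \<Longrightarrow> nf_pair (nf_act l m)"
  using base_twist[of _ l]
  by (cases m) (auto simp: reduced_cons_red reduced_twist dest: set_cons_red[THEN subsetD])

lemma nf_pair_foldr_nf_act: "nf_pair m \<Longrightarrow> nf_pair (foldr nf_act w m)"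
  by (induction w) (auto simp: nf_pair_nf_act)

lemma nf_pair_nf: "nf_pair (nf w)"
  by (simp add: nf_def nf_pair_foldr_nf_act)

lemma nf_Cons: "nf (l # w) = nf_act l (nf w)"
  and nf_append: "nf (v @ w) = foldr nf_act v (nf w)"
  by (simp_all add: nf_def)

lemma nf_act_cancel: "nf_pair m \<Longrightarrow> nf_act l (nf_act (letter_inv l) m) = m"
  by (cases m) (auto simp: cons_red_cancel reduced_cons_red reduced_twist
      twist_twist_inv twist_twist_inv[of _ "letter_inv l", simplified])

lemma foldr_nf_act_base:
  "\<forall>x\<in>set u. is_base x \<Longrightarrow> foldr nf_act u (v, h) = (free_mult u v, h)"
  by (induction u) auto

lemma foldr_nf_act_non_base:
  "\<forall>x\<in>set g. \<not> is_base x \<Longrightarrow> foldr nf_act g (v, h) = (foldr twist g v, free_mult g h)"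
  by (induction g) auto

lemma foldr_nf_act_relation:
  assumes "\<not> is_base l" "is_base x" "nf_pair m"
  shows "foldr nf_act [l, x, letter_inv l] m = foldr nf_act (twist_letter l x) m"
proof -
  obtain u g where m: "m = (u, g)" by (cases m)
  have "reduced u" "reduced g" using assms(3) by (simp_all add: m)
  then have "foldr nf_act [l, x, letter_inv l] m = (free_mult (twist_letter l x) u, g)"
    using assms(1,2) by (simp add: m twist_cons_red twist_twist_inv cons_red_cancel)
  also have "\<dots> = foldr nf_act (twist_letter l x) m"
    using foldr_nf_act_base base_twist_letter[OF assms(2)] by (simp add: m)
  finally show ?thesis .
qed

lemma foldr_nf_act_pres_eqv:
  "pres_eqv rels6 v w \<Longrightarrow> nf_pair m \<Longrightarrow> foldr nf_act v m = foldr nf_act w m"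
proof (induction arbitrary: m rule: pres_eqv.induct)
  case (cong u v p q)
  then show ?case by (simp add: nf_pair_foldr_nf_act)
next
  case (cancel x e)
  then show ?case using nf_act_cancel[of m "(x, e)"] by (simp add: letter_inv_def)
next
  case (rel u v)
  have "\<not> is_base (y, False)" if "y \<in> {gs, gt}" for y using that by (auto simp: is_base_def)
  moreover have "is_base (x, False)" if "x \<in> {ga, gb, gc}" for x using that by (simp add: is_base_def)
  ultimately show ?case
    using rel foldr_nf_act_relation[of "(_, False)" "(_, False)" m]
    by (auto simp: rels6_def letter_inv_def)
qed simp_all

lemma nf_eq_if_pres_eqv: "pres_eqv rels6 v w \<Longrightarrow> nf v = nf w"
  unfolding nf_def by (rule foldr_nf_act_pres_eqv) simp_all

abbreviation cl6 :: "gen word \<Rightarrow> gen word set" where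
  "cl6 \<equiv> pres_class rels6"

interpretation G6: group G6
  unfolding G6_def by (rule group_presented_group)

lemma G6_carrier: "carrier G6 = range cl6"
  and G6_mult: "cl6 u \<otimes>\<^bsub>G6\<^esub> cl6 v = cl6 (u @ v)"
  and G6_one: "\<one>\<^bsub>G6\<^esub> = cl6 []"
  and G6_inv: "inv\<^bsub>G6\<^esub> (cl6 u) = cl6 (word_inv u)"
  by (simp_all add: G6_def presented_group_carrier presented_group_mult presented_group_one
      presented_group_inv)

lemma cl6_in_carrier [simp]: "cl6 u \<in> carrier G6"
  by (simp add: G6_carrier)

lemma gen6_in_carrier [simp]: "gen6 x \<in> carrier G6"
  by (simp add: gen6_def)

lemma cl6_Cons: "cl6 (x # w) = cl6 [x] \<otimes>\<^bsub>G6\<^esub> cl6 w"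
  by (simp add: G6_mult)

lemma G6_relation:
  assumes "y \<in> {gs, gt}" "x \<in> {ga, gb, gc}"
  shows "gen6 y \<otimes>\<^bsub>G6\<^esub> gen6 x \<otimes>\<^bsub>G6\<^esub> inv\<^bsub>G6\<^esub> (gen6 y) =
    cl6 (twist_letter (y, False) (x, False))"
proof -
  have "([(y, False), (x, False), (y, True)], twist_letter (y, False) (x, False)) \<in> rels6"
    using assms unfolding rels6_def by (elim insertE emptyE) simp_all
  then show ?thesis
    by (simp add: gen6_def G6_mult G6_inv letter_inv_def pres_class_eq_iff pres_eqv.rel)
qed

lemma G6_conj_base_word:
  assumes conj_letter: "\<And>x. is_base x \<Longrightarrow>
      cl6 [l] \<otimes>\<^bsub>G6\<^esub> cl6 [x] \<otimes>\<^bsub>G6\<^esub> inv\<^bsub>G6\<^esub> (cl6 [l]) = cl6 (twist_letter l x)"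
    and "\<forall>x\<in>set u. is_base x"
  shows "cl6 [l] \<otimes>\<^bsub>G6\<^esub> cl6 u \<otimes>\<^bsub>G6\<^esub> inv\<^bsub>G6\<^esub> (cl6 [l]) =
    cl6 (concat (map (twist_letter l) u))"
  using assms(2)
proof (induction u)
  case Nil
  show ?case by (simp flip: G6_one)
next
  case (Cons x u)
  have "cl6 [l] \<otimes>\<^bsub>G6\<^esub> cl6 (x # u) \<otimes>\<^bsub>G6\<^esub> inv\<^bsub>G6\<^esub> (cl6 [l]) =
      (cl6 [l] \<otimes>\<^bsub>G6\<^esub> cl6 [x] \<otimes>\<^bsub>G6\<^esub> inv\<^bsub>G6\<^esub> (cl6 [l])) \<otimes>\<^bsub>G6\<^esub>
      (cl6 [l] \<otimes>\<^bsub>G6\<^esub> cl6 u \<otimes>\<^bsub>G6\<^esub> inv\<^bsub>G6\<^esub> (cl6 [l]))"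
    unfolding cl6_Cons[of x u] using hom_mult[OF G6.conj_hom[of "cl6 [l]"], of "cl6 [x]" "cl6 u"]
    by simp
  then show ?case using Cons conj_letter[of x] by (simp add: G6_mult)
qed

lemma G6_conj_letter:
  assumes "\<not> is_base l" "is_base x"
  shows "cl6 [l] \<otimes>\<^bsub>G6\<^esub> cl6 [x] \<otimes>\<^bsub>G6\<^esub> inv\<^bsub>G6\<^esub> (cl6 [l]) = cl6 (twist_letter l x)"
proof -
  have pos: "gen6 y \<otimes>\<^bsub>G6\<^esub> cl6 [x] \<otimes>\<^bsub>G6\<^esub> inv\<^bsub>G6\<^esub> (gen6 y) = cl6 (twist_letter (y, False) x)"
    if y: "y \<in> {gs, gt}" and x: "is_base x" for y x
  proof (cases x)
    case (Pair z d)
    then have z: "z \<in> {ga, gb, gc}" using x by (simp add: is_base_def)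
    show ?thesis
    proof (cases d)
      case False
      then show ?thesis using G6_relation[OF y z] Pair by (simp add: gen6_def)
    next
      case True
      have "cl6 [x] = inv\<^bsub>G6\<^esub> (gen6 z)"
        by (simp add: gen6_def G6_inv Pair True letter_inv_def)
      moreover have "twist_letter (y, False) x = word_inv (twist_letter (y, False) (z, False))"
        using twist_letter_letter_inv[of "(y, False)" "(z, False)"] by (simp add: Pair True letter_inv_def)
      ultimately show ?thesis
        using G6_relation[OF y z] by (simp add: G6.conj_inv G6_inv flip: G6_inv)
    qed
  qed
  obtain y e where l: "l = (y, e)" and y: "y \<in> {gs, gt}"
    using assms(1) by (cases l) (simp add: not_is_base_iff)
  show ?thesis
  proof (cases e)
    case False
    then show ?thesis using pos[OF y assms(2)] l by (simp add: gen6_def)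
  next
    case True
    txt \<open>Conjugation by y undoes the twist by y^-1.\<close>
    let ?w = "twist_letter l x"
    have "gen6 y \<otimes>\<^bsub>G6\<^esub> cl6 ?w \<otimes>\<^bsub>G6\<^esub> inv\<^bsub>G6\<^esub> (gen6 y) =
        cl6 (concat (map (twist_letter (y, False)) ?w))"
      using G6_conj_base_word[of "(y, False)" ?w] pos[OF y] base_twist_letter[OF assms(2)]
      by (simp add: gen6_def)
    also have "\<dots> = cl6 [x]"
      using free_mult_twist_letter_inv[of "[]" "(y, False)" x]
        pres_eqv_free_mult[of rels6 "concat (map (twist_letter (y, False)) ?w)" "[]"]
      by (simp add: l True letter_inv_def cons_red_def pres_class_eq_iff)
    finally have "cl6 ?w = inv\<^bsub>G6\<^esub> (gen6 y) \<otimes>\<^bsub>G6\<^esub> cl6 [x] \<otimes>\<^bsub>G6\<^esub> gen6 y"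
      by (metis G6.conjugation_is_surj G6.inv_closed G6.inv_inv cl6_in_carrier gen6_in_carrier)
    moreover have "cl6 [l] = inv\<^bsub>G6\<^esub> (gen6 y)"
      by (simp add: gen6_def G6_inv l True letter_inv_def)
    ultimately show ?thesis by simp
  qed
qed

lemma G6_conj_twist:
  assumes "\<not> is_base l" "\<forall>x\<in>set u. is_base x"
  shows "cl6 [l] \<otimes>\<^bsub>G6\<^esub> cl6 u \<otimes>\<^bsub>G6\<^esub> inv\<^bsub>G6\<^esub> (cl6 [l]) = cl6 (twist l u)"
  using G6_conj_base_word[OF G6_conj_letter[OF assms(1)] assms(2)]
    pres_eqv_free_mult[of rels6 "concat (map (twist_letter l) u)" "[]"]
  by (simp add: twist_def pres_class_eq_iff)

lemma cl6_nf: "cl6 w = cl6 (fst (nf w)) \<otimes>\<^bsub>G6\<^esub> cl6 (snd (nf w))"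
proof (induction w)
  case Nil
  show ?case by (simp add: nf_def G6_mult)
next
  case (Cons l w)
  obtain u g where nf_w: "nf w = (u, g)" by (cases "nf w")
  have IH: "cl6 (l # w) = cl6 [l] \<otimes>\<^bsub>G6\<^esub> cl6 u \<otimes>\<^bsub>G6\<^esub> cl6 g"
    using Cons.IH by (simp add: nf_w cl6_Cons[of l w] G6.m_assoc)
  have cons_red: "cl6 [l] \<otimes>\<^bsub>G6\<^esub> cl6 v = cl6 (cons_red l v)" for v
    by (simp add: G6_mult pres_class_eq_iff pres_eqv_cons_red)
  show ?case
  proof (cases "is_base l")
    case True
    then show ?thesis using IH by (simp add: nf_Cons nf_w cons_red)
  next
    case False
    have "\<forall>x\<in>set u. is_base x" using nf_pair_nf[of w] by (simp add: nf_w)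
    then have "cl6 [l] \<otimes>\<^bsub>G6\<^esub> cl6 u = cl6 (twist l u) \<otimes>\<^bsub>G6\<^esub> cl6 [l]"
      using G6_conj_twist[OF False] by (metis G6.inv_solve_right' G6.m_closed cl6_in_carrier)
    then show ?thesis using IH False by (simp add: nf_Cons nf_w G6.m_assoc cons_red)
  qed
qed

lemma cl6_eq_iff_nf: "cl6 v = cl6 w \<longleftrightarrow> nf v = nf w"
proof
  assume "cl6 v = cl6 w"
  then show "nf v = nf w" by (simp add: pres_class_eq_iff nf_eq_if_pres_eqv)
next
  assume "nf v = nf w"
  then show "cl6 v = cl6 w" using cl6_nf[of v] cl6_nf[of w] by simp
qed

lemma nf_nf_word: "nf (fst (nf w) @ snd (nf w)) = nf w"
  using cl6_nf[of w] by (simp add: G6_mult flip: cl6_eq_iff_nf)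

lemma cl6_nf_word: "cl6 (fst (nf w) @ snd (nf w)) = cl6 w"
  by (simp add: cl6_eq_iff_nf nf_nf_word)

lemma nf_commute_base_letter:
  assumes nf_w: "nf w = (u, g)" and x: "is_base x" "fst x \<noteq> ga"
    and comm: "cl6 w \<otimes>\<^bsub>G6\<^esub> cl6 [x] = cl6 [x] \<otimes>\<^bsub>G6\<^esub> cl6 w"
  shows "free_mult u [x] = cons_red x u"
proof -
  have pair: "nf_pair (u, g)" using nf_pair_nf[of w] by (simp add: nf_w)
  have "cl6 (u @ g) \<otimes>\<^bsub>G6\<^esub> cl6 [x] = cl6 [x] \<otimes>\<^bsub>G6\<^esub> cl6 (u @ g)"
    using comm cl6_nf_word[of w] by (simp add: nf_w)
  then have "cl6 (u @ g @ [x]) = cl6 (x # u @ g)" by (simp add: G6_mult)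
  then have "nf (u @ g @ [x]) = nf_act x (nf (u @ g))"
    by (simp add: cl6_eq_iff_nf nf_Cons)
  moreover have "nf (u @ g @ [x]) = (free_mult u [x], g)"
    using pair x foldr_nf_act_base[of u] foldr_nf_act_non_base[of g]
    by (simp add: nf_append nf_def foldr_twist_non_a free_mult_reduced[of g "[]"])
  moreover have "nf (u @ g) = (u, g)" using nf_nf_word[of w] by (simp add: nf_w)
  ultimately show ?thesis using x by simp
qed

lemma nf_commute_non_base_letter:
  assumes nf_w: "nf w = ([], g)" and x: "\<not> is_base x"
    and comm: "cl6 w \<otimes>\<^bsub>G6\<^esub> cl6 [x] = cl6 [x] \<otimes>\<^bsub>G6\<^esub> cl6 w"
  shows "free_mult g [x] = cons_red x g"
proof -
  have pair: "nf_pair ([], g)" using nf_pair_nf[of w] by (simp add: nf_w)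
  have "cl6 g \<otimes>\<^bsub>G6\<^esub> cl6 [x] = cl6 [x] \<otimes>\<^bsub>G6\<^esub> cl6 g"
    using comm cl6_nf_word[of w] by (simp add: nf_w)
  then have "cl6 (g @ [x]) = cl6 (x # g)" by (simp add: G6_mult)
  then have "nf (g @ [x]) = nf_act x (nf g)"
    by (simp add: cl6_eq_iff_nf nf_Cons)
  moreover have "nf (g @ [x]) = ([], free_mult g [x])"
    using pair x foldr_nf_act_non_base[of "g @ [x]" "[]" "[]"] by (simp add: nf_def free_mult_append)
  moreover have "nf g = ([], g)" using nf_nf_word[of w] by (simp add: nf_w)
  ultimately show ?thesis using x by simp
qed

lemma cl6_in_generate:
  "\<forall>l\<in>set g. fst l \<in> Y \<Longrightarrow> cl6 g \<in> generate G6 (gen6 ` Y)"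
proof (induction g)
  case Nil
  show ?case using generate.one[of G6] by (simp add: G6_one)
next
  case (Cons l g)
  obtain y e where l: "l = (y, e)" and y: "y \<in> Y" using Cons.prems by (cases l) auto
  have "cl6 [l] \<in> generate G6 (gen6 ` Y)"
  proof (cases e)
    case False
    then show ?thesis using y by (auto simp: l gen6_def intro: generate.incl)
  next
    case True
    then have "cl6 [l] = inv\<^bsub>G6\<^esub> (gen6 y)" by (simp add: l gen6_def G6_inv letter_inv_def)
    then show ?thesis using y by (auto intro: generate.inv)
  qed
  then show ?case using Cons by (auto simp: cl6_Cons[of l g] intro: generate.eng)
qed

lemma G6_commute:
  assumes "y \<in> {gs, gt}" "x \<in> {gb, gc}"
  shows "gen6 y \<otimes>\<^bsub>G6\<^esub> gen6 x = gen6 x \<otimes>\<^bsub>G6\<^esub> gen6 y"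
proof -
  have "gen6 y \<otimes>\<^bsub>G6\<^esub> gen6 x \<otimes>\<^bsub>G6\<^esub> inv\<^bsub>G6\<^esub> (gen6 y) = gen6 x"
    using G6_relation[of y x] assms twist_letter_non_a[of "(x, False)"] by (auto simp: gen6_def)
  then show ?thesis by (simp add: G6.inv_solve_right')
qed

lemma G6_conj_pow_gs:
  "gen6 gs [^]\<^bsub>G6\<^esub> (i::int) \<otimes>\<^bsub>G6\<^esub> gen6 ga \<otimes>\<^bsub>G6\<^esub> inv\<^bsub>G6\<^esub> (gen6 gs [^]\<^bsub>G6\<^esub> i) =
    gen6 ga \<otimes>\<^bsub>G6\<^esub> gen6 gb [^]\<^bsub>G6\<^esub> i"
  using G6_relation[of gs ga] G6_commute[of gs gb]
  by (intro G6.int_pow_conj_right_twist) (simp_all add: gen6_def G6_mult)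

lemma G6_conj_pow_gt:
  "gen6 gt [^]\<^bsub>G6\<^esub> (i::int) \<otimes>\<^bsub>G6\<^esub> gen6 ga \<otimes>\<^bsub>G6\<^esub> inv\<^bsub>G6\<^esub> (gen6 gt [^]\<^bsub>G6\<^esub> i) =
    gen6 gb [^]\<^bsub>G6\<^esub> i \<otimes>\<^bsub>G6\<^esub> gen6 ga"
  using G6_relation[of gt ga] G6_commute[of gt gb]
  by (intro G6.int_pow_conj_left_twist) (simp_all add: gen6_def G6_mult)

lemma G6_nat_pow: "cl6 [l] [^]\<^bsub>G6\<^esub> (n::nat) = cl6 (replicate n l)"
  by (induction n) (simp_all add: G6_one G6_mult replicate_append_same)

lemma G6_gb_int_pow_inj:
  assumes "gen6 gb [^]\<^bsub>G6\<^esub> (i::int) = gen6 gb [^]\<^bsub>G6\<^esub> (j::int)"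
  shows "i = j"
proof -
  have b_order: "n = 0" if "gen6 gb [^]\<^bsub>G6\<^esub> n = \<one>\<^bsub>G6\<^esub>" for n :: nat
  proof -
    have "nf (replicate n (gb, False)) = nf []"
      using that by (simp add: gen6_def G6_nat_pow G6_one cl6_eq_iff_nf)
    moreover have "nf (replicate n (gb, False)) = (replicate n (gb, False), [])"
      using foldr_nf_act_base[of "replicate n (gb, False)" "[]" "[]"]
        free_mult_reduced[of "replicate n (gb, False)" "[]"]
      by (simp add: nf_def is_base_def reduced_replicate)
    ultimately show "n = 0" by (simp add: nf_def)
  qed
  have "gen6 gb [^]\<^bsub>G6\<^esub> (i - j) = \<one>\<^bsub>G6\<^esub>"
    using assms by (simp add: G6.int_pow_diff)
  then show ?thesis
  proof (cases "i - j" rule: int_cases2)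
    case (nonneg n)
    then show ?thesis using b_order[of n] \<open>_ = \<one>\<^bsub>G6\<^esub>\<close> by (simp add: int_pow_int)
  next
    case (nonpos n)
    then show ?thesis using b_order[of n] \<open>_ = \<one>\<^bsub>G6\<^esub>\<close> by (simp add: G6.int_pow_neg_int)
  qed
qed

lemma centraliser_gb_gc_nf:
  assumes "x \<in> centraliser G6 {gen6 gb, gen6 gc}"
  obtains w g where "x = cl6 w" "nf w = ([], g)"
proof -
  obtain w where x: "x = cl6 w" using assms by (auto simp: centraliser_def G6_carrier)
  obtain u g where nf_w: "nf w = (u, g)" by (cases "nf w")
  have "reduced u" using nf_pair_nf[of w] by (simp add: nf_w)
  have u_pow: "\<exists>n e. u = replicate n (y, e)" if "y \<in> {gb, gc}" for y
  proof (rule commute_letter_replicate[of u "(y, False)", simplified])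
    show "reduced u" by fact
    have "gen6 y \<in> {gen6 gb, gen6 gc}" using that by blast
    then have "cl6 w \<otimes>\<^bsub>G6\<^esub> cl6 [(y, False)] = cl6 [(y, False)] \<otimes>\<^bsub>G6\<^esub> cl6 w"
      using assms unfolding centraliser_def x gen6_def by blast
    then show "free_mult u [(y, False)] = cons_red (y, False) u"
      using that by (intro nf_commute_base_letter[OF nf_w]) (auto simp: is_base_def)
  qed
  obtain n e m d where "u = replicate n (gb, e)" "u = replicate m (gc, d)"
    using u_pow[of gb] u_pow[of gc] by auto
  then have "u = []" by (cases n; cases m) auto
  then show ?thesis using that x nf_w by blast
qed

lemma centraliser_gb_gc:
  "centraliser G6 {gen6 gb, gen6 gc} = generate G6 {gen6 gs, gen6 gt}"
proof
  show "generate G6 {gen6 gs, gen6 gt} \<subseteq> centraliser G6 {gen6 gb, gen6 gc}"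
    using G6_commute by (intro G6.generate_subgroup_incl G6.subgroup_centraliser)
      (auto simp: centraliser_def)
next
  show "centraliser G6 {gen6 gb, gen6 gc} \<subseteq> generate G6 {gen6 gs, gen6 gt}"
  proof
    fix x assume "x \<in> centraliser G6 {gen6 gb, gen6 gc}"
    then obtain w g where x: "x = cl6 w" and nf_w: "nf w = ([], g)"
      by (rule centraliser_gb_gc_nf)
    have "\<forall>l\<in>set g. fst l \<in> {gs, gt}"
      using nf_pair_nf[of w] by (simp add: nf_w not_is_base_iff)
    then show "x \<in> generate G6 {gen6 gs, gen6 gt}"
      using cl6_in_generate[of g "{gs, gt}"] cl6_nf_word[of w] by (simp add: x nf_w)
  qed
qed

lemma centraliser_gb_gc_gen:
  assumes y: "y \<in> {gs, gt}"
  shows "centraliser G6 {gen6 gb, gen6 gc, gen6 y} = generate G6 {gen6 y}"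
proof
  show "generate G6 {gen6 y} \<subseteq> centraliser G6 {gen6 gb, gen6 gc, gen6 y}"
    using G6_commute y by (intro G6.generate_subgroup_incl G6.subgroup_centraliser)
      (auto simp: centraliser_def)
next
  show "centraliser G6 {gen6 gb, gen6 gc, gen6 y} \<subseteq> generate G6 {gen6 y}"
  proof
    fix x assume x_cent: "x \<in> centraliser G6 {gen6 gb, gen6 gc, gen6 y}"
    then have "x \<in> centraliser G6 {gen6 gb, gen6 gc}" by (auto simp: centraliser_def)
    then obtain w g where x: "x = cl6 w" and nf_w: "nf w = ([], g)"
      by (rule centraliser_gb_gc_nf)
    have "cl6 w \<otimes>\<^bsub>G6\<^esub> cl6 [(y, False)] = cl6 [(y, False)] \<otimes>\<^bsub>G6\<^esub> cl6 w"
      using x_cent unfolding centraliser_def x gen6_def by blast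
    then have "free_mult g [(y, False)] = cons_red (y, False) g"
      using y by (intro nf_commute_non_base_letter[OF nf_w]) (auto simp: is_base_def)
    moreover have "reduced g" using nf_pair_nf[of w] by (simp add: nf_w)
    ultimately obtain n e where "g = replicate n (y, e)"
      using commute_letter_replicate by fastforce
    then show "x \<in> generate G6 {gen6 y}"
      using cl6_in_generate[of g "{y}"] cl6_nf_word[of w] by (simp add: x nf_w)
  qed
qed

lemma eq_definable_generate_gen:
  assumes "y \<in> {gs, gt}"
  shows "eq_definable G6 1 {[g] | g. g \<in> generate G6 {gen6 y}}"
  using G6.eq_definable_centraliser[of "{gen6 gb, gen6 gc, gen6 y}"]
  by (simp add: centraliser_gb_gc_gen[OF assms])

lemma eq_definable_generate_gs_gt:
  "eq_definable G6 1 {[g] | g. g \<in> generate G6 {gen6 gs, gen6 gt}}"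
  using G6.eq_definable_centraliser[of "{gen6 gb, gen6 gc}"]
  by (simp add: centraliser_gb_gc)

definition gb_eqs :: "gen word set equation set" where
  "gb_eqs = insert
    (eq_equal G6 [Inr (1, False), Inl (gen6 ga), Inr (1, True)] [Inl (gen6 ga), Inr (0, False)])
    (commute_eqs G6 1 {gen6 gb, gen6 gc, gen6 gs})"

definition pow_pair_eqs :: "gen word set equation set" where
  "pow_pair_eqs =
    {eq_equal G6 [Inr (0, False), Inl (gen6 ga), Inr (0, True)] [Inl (gen6 ga), Inr (2, False)],
     eq_equal G6 [Inr (1, False), Inl (gen6 ga), Inr (1, True)] [Inr (2, False), Inl (gen6 ga)]}
    \<union> commute_eqs G6 0 {gen6 gb, gen6 gc, gen6 gs} \<union> commute_eqs G6 1 {gen6 gb, gen6 gc, gen6 gt}"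

lemma gb_eqs_equations: "finite gb_eqs" "\<forall>w\<in>gb_eqs. is_equation G6 w"
  using G6.is_equation_commute_eqs[of "{gen6 gb, gen6 gc, gen6 gs}"]
  by (auto simp: gb_eqs_def commute_eqs_def intro!: G6.is_equation_eq_equal)
    (simp_all add: is_equation_def)

lemma pow_pair_eqs_equations: "finite pow_pair_eqs" "\<forall>w\<in>pow_pair_eqs. is_equation G6 w"
  using G6.is_equation_commute_eqs[of "{gen6 gb, gen6 gc, gen6 gs}"]
    G6.is_equation_commute_eqs[of "{gen6 gb, gen6 gc, gen6 gt}"]
  by (auto simp: pow_pair_eqs_def commute_eqs_def intro!: G6.is_equation_eq_equal)
    (simp_all add: is_equation_def)

lemma solves_gb_eqs_iff:
  "solves G6 gb_eqs \<sigma> \<longleftrightarrow> (\<forall>x. \<sigma> x \<in> carrier G6) \<and> \<sigma> 1 \<in> generate G6 {gen6 gs} \<and>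
    \<sigma> 1 \<otimes>\<^bsub>G6\<^esub> gen6 ga \<otimes>\<^bsub>G6\<^esub> inv\<^bsub>G6\<^esub> (\<sigma> 1) = gen6 ga \<otimes>\<^bsub>G6\<^esub> \<sigma> 0"
proof (cases "\<forall>x. \<sigma> x \<in> carrier G6")
  case True
  then show ?thesis
    using G6.eq_eval_commute_eqs[OF True, of "{gen6 gb, gen6 gc, gen6 gs}" 1]
      G6.eq_eval_conj_eq[OF True, of "gen6 ga" "[Inl (gen6 ga), Inr (0, False)]" 1]
      centraliser_gb_gc_gen[of gs]
    by (simp add: solves_def gb_eqs_def is_equation_def conj_commute)
qed (auto simp: solves_def)

lemma solves_pow_pair_eqs_iff:
  "solves G6 pow_pair_eqs \<sigma> \<longleftrightarrow> (\<forall>x. \<sigma> x \<in> carrier G6) \<and>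
    \<sigma> 0 \<in> generate G6 {gen6 gs} \<and> \<sigma> 1 \<in> generate G6 {gen6 gt} \<and>
    \<sigma> 0 \<otimes>\<^bsub>G6\<^esub> gen6 ga \<otimes>\<^bsub>G6\<^esub> inv\<^bsub>G6\<^esub> (\<sigma> 0) = gen6 ga \<otimes>\<^bsub>G6\<^esub> \<sigma> 2 \<and>
    \<sigma> 1 \<otimes>\<^bsub>G6\<^esub> gen6 ga \<otimes>\<^bsub>G6\<^esub> inv\<^bsub>G6\<^esub> (\<sigma> 1) = \<sigma> 2 \<otimes>\<^bsub>G6\<^esub> gen6 ga"
proof (cases "\<forall>x. \<sigma> x \<in> carrier G6")
  case True
  then show ?thesis
    using G6.eq_eval_commute_eqs[OF True, of "{gen6 gb, gen6 gc, gen6 gs}" 0]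
      G6.eq_eval_commute_eqs[OF True, of "{gen6 gb, gen6 gc, gen6 gt}" 1]
      G6.eq_eval_conj_eq[OF True, of "gen6 ga" "[Inl (gen6 ga), Inr (2, False)]" 0]
      G6.eq_eval_conj_eq[OF True, of "gen6 ga" "[Inr (2, False), Inl (gen6 ga)]" 1]
      centraliser_gb_gc_gen[of gs] centraliser_gb_gc_gen[of gt]
    by (simp add: solves_def pow_pair_eqs_def is_equation_def) blast
qed (auto simp: solves_def)

lemma eq_definable_generate_gb:
  "eq_definable G6 1 {[g] | g. g \<in> generate G6 {gen6 gb}}"
proof (rule eq_definableI[where E = gb_eqs and xs = "[0]"])
  fix \<sigma> assume "solves G6 gb_eqs \<sigma>"
  then obtain i where "\<sigma> 1 = gen6 gs [^]\<^bsub>G6\<^esub> (i::int)" "\<sigma> 0 \<in> carrier G6"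
    and "gen6 ga \<otimes>\<^bsub>G6\<^esub> \<sigma> 0 = \<sigma> 1 \<otimes>\<^bsub>G6\<^esub> gen6 ga \<otimes>\<^bsub>G6\<^esub> inv\<^bsub>G6\<^esub> (\<sigma> 1)"
    using G6.generate_pow[of "gen6 gs"] solves_gb_eqs_iff by auto
  then have "\<sigma> 0 = gen6 gb [^]\<^bsub>G6\<^esub> i" using G6_conj_pow_gs[of i] by simp
  then show "map \<sigma> [0] \<in> {[g] | g. g \<in> generate G6 {gen6 gb}}"
    using G6.generate_pow[of "gen6 gb"] by auto
next
  fix d assume "d \<in> {[g] | g. g \<in> generate G6 {gen6 gb}}"
  then obtain i where d: "d = [gen6 gb [^]\<^bsub>G6\<^esub> (i::int)]"
    using G6.generate_pow[of "gen6 gb"] by auto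
  let ?\<sigma> = "\<lambda>k::nat. if k = 0 then gen6 gb [^]\<^bsub>G6\<^esub> i else gen6 gs [^]\<^bsub>G6\<^esub> i"
  have "solves G6 gb_eqs ?\<sigma>"
    using solves_gb_eqs_iff G6_conj_pow_gs[of i] G6.generate_pow[of "gen6 gs"] by auto
  then show "\<exists>\<sigma>. solves G6 gb_eqs \<sigma> \<and> map \<sigma> [0] = d" using d by (intro exI[of _ ?\<sigma>]) simp
qed (use gb_eqs_equations in simp_all)

lemma eq_definable_pow_pairs:
  "eq_definable G6 2 {[gen6 gs [^]\<^bsub>G6\<^esub> (i::int), gen6 gt [^]\<^bsub>G6\<^esub> i] | i. True}"
proof (rule eq_definableI[where E = pow_pair_eqs and xs = "[0, 1]"])
  fix \<sigma> assume sol: "solves G6 pow_pair_eqs \<sigma>"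
  then obtain i j where i: "\<sigma> 0 = gen6 gs [^]\<^bsub>G6\<^esub> (i::int)" and j: "\<sigma> 1 = gen6 gt [^]\<^bsub>G6\<^esub> (j::int)"
    using G6.generate_pow[of "gen6 gs"] G6.generate_pow[of "gen6 gt"] solves_pow_pair_eqs_iff by auto
  have "gen6 ga \<otimes>\<^bsub>G6\<^esub> \<sigma> 2 = gen6 ga \<otimes>\<^bsub>G6\<^esub> gen6 gb [^]\<^bsub>G6\<^esub> i" "\<sigma> 2 \<in> carrier G6"
    using sol solves_pow_pair_eqs_iff G6_conj_pow_gs[of i] i by auto
  then have "\<sigma> 2 = gen6 gb [^]\<^bsub>G6\<^esub> i" by simp
  moreover have "\<sigma> 2 \<otimes>\<^bsub>G6\<^esub> gen6 ga = gen6 gb [^]\<^bsub>G6\<^esub> j \<otimes>\<^bsub>G6\<^esub> gen6 ga"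
    using sol solves_pow_pair_eqs_iff G6_conj_pow_gt[of j] j by auto
  ultimately have "i = j" using G6_gb_int_pow_inj by simp
  then show "map \<sigma> [0, 1] \<in> {[gen6 gs [^]\<^bsub>G6\<^esub> (i::int), gen6 gt [^]\<^bsub>G6\<^esub> i] | i. True}"
    using i j by auto
next
  fix d assume "d \<in> {[gen6 gs [^]\<^bsub>G6\<^esub> (i::int), gen6 gt [^]\<^bsub>G6\<^esub> i] | i. True}"
  then obtain i where d: "d = [gen6 gs [^]\<^bsub>G6\<^esub> (i::int), gen6 gt [^]\<^bsub>G6\<^esub> i]" by blast
  let ?\<sigma> = "\<lambda>k::nat. if k = 0 then gen6 gs [^]\<^bsub>G6\<^esub> i
    else if k = 1 then gen6 gt [^]\<^bsub>G6\<^esub> i else gen6 gb [^]\<^bsub>G6\<^esub> i"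
  have "solves G6 pow_pair_eqs ?\<sigma>"
    using solves_pow_pair_eqs_iff G6_conj_pow_gs[of i] G6_conj_pow_gt[of i]
      G6.generate_pow[of "gen6 gs"] G6.generate_pow[of "gen6 gt"] by auto
  then show "\<exists>\<sigma>. solves G6 pow_pair_eqs \<sigma> \<and> map \<sigma> [0, 1] = d" using d by (intro exI[of _ ?\<sigma>]) simp
qed (use pow_pair_eqs_equations in simp_all)

theorem lemma6p4:
  shows "eq_definable G6 1 {[g] | g. g \<in> generate G6 {gen6 gb}} \<and>
         eq_definable G6 1 {[g] | g. g \<in> generate G6 {gen6 gs}} \<and>
         eq_definable G6 1 {[g] | g. g \<in> generate G6 {gen6 gt}} \<and>
         eq_definable G6 2 {[gen6 gs [^]\<^bsub>G6\<^esub> (i::int), gen6 gt [^]\<^bsub>G6\<^esub> i] | i. True} \<and>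
         eq_definable G6 1 {[g] | g. g \<in> generate G6 {gen6 gs, gen6 gt}}"
  using eq_definable_generate_gb eq_definable_generate_gen[of gs] eq_definable_generate_gen[of gt]
    eq_definable_pow_pairs eq_definable_generate_gs_gt
  by simp

end
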